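(* For every $\epsilon>0$ there exists a constant $C>0$ such that the following holds. Let $d\in\mathbb{N}$ with $d\ge C$, let $G$ be a $d$-regular graph on $n$ vertices, and let $p\in[0,1]$ with $p\ge \frac{C}{d}$. Then, with probability tending to one as $n\to\infty$, there exists a matching in $G_p$ covering at least $(1-\epsilon)n$ vertices.
   Context: Given a graph $G$ and $p\in[0,1]$, the random subgraph $G_p$ is the spanning subgraph of $G$ obtained by retaining each edge of $G$ independently with probability $p$. *)

theory Defs
  imports "HOL-Probability.Probability"
begin

definition simple_graph :: "nat \<Rightarrow> nat set set \<Rightarrow> bool" where
  "simple_graph n E \<longleftrightarrow> (\<forall>e\<in>E. e \<subseteq> {..<n} \<and> card e = 2)"

definition regular_graph :: "nat \<Rightarrow> nat \<Rightarrow> nat set set \<Rightarrow> bool" where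
  "regular_graph n d E \<longleftrightarrow> simple_graph n E \<and> (\<forall>v\<in>{..<n}. card {e\<in>E. v \<in> e} = d)"

definition is_matching :: "nat set set \<Rightarrow> nat set set \<Rightarrow> bool" where
  "is_matching E M \<longleftrightarrow> M \<subseteq> E \<and> (\<forall>e\<in>M. \<forall>f\<in>M. e \<noteq> f \<longrightarrow> e \<inter> f = {})"

text \<open>The random subgraph G_p: each edge kept independently with probability p;
  an outcome is the indicator function of the kept edges (extensional outside E).\<close>
definition random_subgraph :: "nat set set \<Rightarrow> real \<Rightarrow> (nat set \<Rightarrow> bool) pmf" where
  "random_subgraph E p = Pi_pmf E False (\<lambda>_. bernoulli_pmf p)"

definition prob_large_matching :: "nat \<Rightarrow> nat set set \<Rightarrow> real \<Rightarrow> real \<Rightarrow> real" where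
  "prob_large_matching n E p eps =
     measure_pmf.prob (random_subgraph E p)
       {keep. \<exists>M. is_matching {e\<in>E. keep e} M \<and> real (card (\<Union>M)) \<ge> (1 - eps) * real n}"

end

theory Submission
  imports Defs
begin

text \<open>
  Averaging over all \<open>2^n\<close> cuts \<open>(T, V - T)\<close>, the squared imbalance
  \<open>(\<Sum>e \<ni> v. \<plusminus>1)\<^sup>2\<close> of a vertex (edges inside a side count \<open>+1\<close>, crossing
  edges \<open>-1\<close>) has mean \<open>d\<close>; so some cut \<open>(A, B)\<close> with \<open>|A| \<ge> n/2\<close> has total squared
  imbalance at most \<open>nd\<close>, hence total absolute imbalance at most \<open>\<epsilon>dn/4\<close> once
  \<open>d\<epsilon>\<^sup>2 \<ge> 16\<close>. By the deficiency form of Hall's theorem, the bipartite part of \<open>G\<^sub>p\<close>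
  between \<open>A\<close> and \<open>B\<close> has a matching missing at most \<open>k \<approx> \<epsilon>n/2\<close> vertices of \<open>A\<close>,
  unless some \<open>X \<subseteq> A\<close>, \<open>Y \<subseteq> B\<close> with \<open>|Y| + k < |X|\<close> have no edge of \<open>G\<^sub>p\<close> between
  \<open>X\<close> and \<open>B - Y\<close>. Near-balance of the cut forces at least \<open>\<epsilon>dn/8\<close> such edges in \<open>G\<close>,
  so each of the at most \<open>2^n\<close> pairs \<open>(X, Y)\<close> is an obstruction with probability at most
  \<open>(1 - p)^(\<epsilon>dn/8) \<le> e^(-3n)\<close>, and a union bound leaves failure probability \<open>e^(-n)\<close>.
\<close>

lemma hall_marriage_union:
  assumes "X \<subseteq> A"
    and inj1: "inj_on f X" "\<forall>a\<in>X. f a \<in> N a"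
    and inj2: "inj_on g (A - X)" "\<forall>a\<in>A - X. g a \<in> N a - \<Union>(N ` X)"
  shows "\<exists>h. inj_on h A \<and> (\<forall>a\<in>A. h a \<in> N a)"
proof -
  define h where "h a = (if a \<in> X then f a else g a)" for a
  have "inj_on h A"
  proof (rule inj_onI)
    fix a b assume ab: "a \<in> A" "b \<in> A" "h a = h b"
    have separated: "f x \<noteq> g y" if "x \<in> X" "y \<in> A - X" for x y
      using that inj1(2) inj2(2) by fastforce
    show "a = b"
      using ab inj1(1) inj2(1) separated[of a b] separated[of b a]
      by (cases "a \<in> X"; cases "b \<in> X") (auto simp: h_def inj_on_def)
  qed
  moreover have "\<forall>a\<in>A. h a \<in> N a" using inj1(2) inj2(2) by (auto simp: h_def)
  ultimately show ?thesis by blast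
qed

lemma hall_condition_outside_critical:
  assumes fA: "finite A" and X: "X \<subseteq> A" "card (\<Union>(N ` X)) \<le> card X"
    and hall: "\<forall>Z\<subseteq>A. card Z \<le> card (\<Union>(N ` Z))"
  shows "\<forall>Z\<subseteq>A - X. card Z \<le> card (\<Union>a\<in>Z. N a - \<Union>(N ` X))"
proof (intro allI impI)
  fix Z assume Z: "Z \<subseteq> A - X"
  have "card Z + card X = card (Z \<union> X)"
    using Z X fA by (subst card_Un_disjoint) (auto intro: finite_subset)
  also have "\<dots> \<le> card (\<Union>(N ` (Z \<union> X)))"
    using hall Z X by (meson Diff_subset Un_least order_trans)
  also have "\<Union>(N ` (Z \<union> X)) = (\<Union>a\<in>Z. N a - \<Union>(N ` X)) \<union> \<Union>(N ` X)"
    by auto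
  also have "card \<dots> \<le> card (\<Union>a\<in>Z. N a - \<Union>(N ` X)) + card (\<Union>(N ` X))"
    by (rule card_Un_le)
  finally show "card Z \<le> card (\<Union>a\<in>Z. N a - \<Union>(N ` X))" using X(2) by linarith
qed

lemma hall_condition_remove_pair:
  assumes surplus: "\<forall>Z. Z \<subseteq> A \<and> Z \<noteq> {} \<and> Z \<noteq> A \<longrightarrow> card Z < card (\<Union>(N ` Z))"
    and a: "a \<in> A"
  shows "\<forall>Z\<subseteq>A - {a}. card Z \<le> card (\<Union>x\<in>Z. N x - {b})"
proof (intro allI impI)
  fix Z assume Z: "Z \<subseteq> A - {a}"
  show "card Z \<le> card (\<Union>x\<in>Z. N x - {b})"
  proof (cases "Z = {}")
    case False
    with Z a surplus have "card Z < card (\<Union>(N ` Z))" by blast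
    moreover have "(\<Union>x\<in>Z. N x - {b}) = \<Union>(N ` Z) - {b}" by auto
    moreover have "card (\<Union>(N ` Z)) - 1 \<le> card (\<Union>(N ` Z) - {b})"
      by (simp add: card_Diff_singleton_if)
    ultimately show ?thesis by simp
  qed simp
qed

theorem hall_marriage:
  assumes "finite A" "\<forall>a\<in>A. finite (N a)" "\<forall>X\<subseteq>A. card X \<le> card (\<Union>(N ` X))"
  shows "\<exists>f. inj_on f A \<and> (\<forall>a\<in>A. f a \<in> N a)"
  using assms
proof (induction A arbitrary: N rule: finite_psubset_induct)
  case (psubset A)
  consider (critical) X where "X \<subseteq> A" "X \<noteq> {}" "X \<noteq> A" "card (\<Union>(N ` X)) \<le> card X"
    | (surplus) "\<forall>Z. Z \<subseteq> A \<and> Z \<noteq> {} \<and> Z \<noteq> A \<longrightarrow> card Z < card (\<Union>(N ` Z))"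
    using not_le by blast
  then show ?case
  proof cases
    case critical
    have "X \<subset> A" "A - X \<subset> A" using critical by auto
    moreover have "\<forall>a\<in>X. finite (N a)" "\<forall>a\<in>A - X. finite (N a - \<Union>(N ` X))"
      using critical(1) psubset.prems(1) by auto
    moreover have "\<forall>Z\<subseteq>X. card Z \<le> card (\<Union>(N ` Z))"
      using critical(1) psubset.prems(2) by auto
    moreover note hall_condition_outside_critical[OF psubset.hyps(1) critical(1,4) psubset.prems(2)]
    ultimately obtain f g where
      "inj_on f X" "\<forall>a\<in>X. f a \<in> N a"
      "inj_on g (A - X)" "\<forall>a\<in>A - X. g a \<in> N a - \<Union>(N ` X)"
      using psubset.IH[of X N] psubset.IH[of "A - X" "\<lambda>a. N a - \<Union>(N ` X)"] by blast
    then show ?thesis using hall_marriage_union[OF critical(1)] by blast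
  next
    case surplus
    show ?thesis
    proof (cases "A = {}")
      case False
      then obtain a where a: "a \<in> A" by blast
      have "card {a} \<le> card (\<Union>(N ` {a}))" using a psubset.prems(2) by blast
      then obtain b where b: "b \<in> N a" by fastforce
      have "A - {a} \<subset> A" "\<forall>x\<in>A - {a}. finite (N x - {b})" using a psubset.prems(1) by auto
      then obtain f where f: "inj_on f (A - {a})" "\<forall>x\<in>A - {a}. f x \<in> N x - {b}"
        using psubset.IH[of "A - {a}" "\<lambda>x. N x - {b}"]
          hall_condition_remove_pair[OF surplus a]
        by blast
      have "inj_on (f(a := b)) A" "\<forall>x\<in>A. (f(a := b)) x \<in> N x"
        using f b a by (auto simp: inj_on_def)
      then show ?thesis by blast
    qed simp
  qed
qed

lemma hall_marriage_deficiency: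
  assumes fA: "finite A" and fN: "\<forall>a\<in>A. finite (N a)"
    and deficiency: "\<forall>X\<subseteq>A. card X \<le> card (\<Union>(N ` X)) + k"
  shows "\<exists>A' f. A' \<subseteq> A \<and> card A \<le> card A' + k \<and> inj_on f A' \<and> (\<forall>a\<in>A'. f a \<in> N a)"
proof -
  \<comment> \<open>Give every vertex of \<open>A\<close> the same \<open>k\<close> extra neighbours and apply Hall's theorem.\<close>
  define N' where "N' a = Inl ` N a \<union> Inr ` {..<k}" for a
  have "\<forall>X\<subseteq>A. card X \<le> card (\<Union>(N' ` X))"
  proof (intro allI impI)
    fix X assume X: "X \<subseteq> A"
    show "card X \<le> card (\<Union>(N' ` X))"
    proof (cases "X = {}")
      case False
      have "finite (\<Union>(N ` X))" using X fA fN finite_subset by blast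
      then have "card (Inl ` \<Union>(N ` X) \<union> Inr ` {..<k}) = card (\<Union>(N ` X)) + k"
        by (subst card_Un_disjoint) (auto simp: card_image)
      moreover have "\<Union>(N' ` X) = Inl ` \<Union>(N ` X) \<union> Inr ` {..<k}"
        using False by (auto simp: N'_def)
      ultimately have "card (\<Union>(N' ` X)) = card (\<Union>(N ` X)) + k" by simp
      then show ?thesis using deficiency X by simp
    qed simp
  qed
  moreover have "\<forall>a\<in>A. finite (N' a)" using fN by (simp add: N'_def)
  ultimately obtain g where g: "inj_on g A" "\<forall>a\<in>A. g a \<in> N' a"
    using hall_marriage[OF fA] by blast
  define A' where "A' = {a\<in>A. isl (g a)}"
  have "g ` (A - A') \<subseteq> Inr ` {..<k}" using g(2) by (auto simp: A'_def N'_def)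
  then have "card (A - A') \<le> card (Inr ` {..<k} :: ('b + nat) set)"
    using g(1) by (intro card_inj_on_le[where f = g]) (auto intro: inj_on_subset)
  then have "card (A - A') \<le> k" by (simp add: card_image)
  moreover have "card A = card A' + card (A - A')"
    using fA by (simp add: A'_def card_Diff_subset card_mono)
  moreover have "inj_on (projl \<circ> g) A'"
    using g(1) by (auto simp: A'_def inj_on_def isl_def)
  moreover have "\<forall>a\<in>A'. (projl \<circ> g) a \<in> N a" using g(2) by (auto simp: A'_def N'_def)
  ultimately show ?thesis by (intro exI[of _ A'] exI[of _ "projl \<circ> g"]) (auto simp: A'_def)
qed

definition edges_between :: "'a set set \<Rightarrow> 'a set \<Rightarrow> 'a set \<Rightarrow> 'a set set" where
  "edges_between E X Y = {e\<in>E. e \<inter> X \<noteq> {} \<and> e \<inter> Y \<noteq> {}}"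

lemma matching_of_inj_on:
  assumes AB: "A \<inter> B = {}" and fA: "finite A" and f: "inj_on f A" "\<forall>a\<in>A. f a \<in> B \<and> {a, f a} \<in> K"
  shows "is_matching K ((\<lambda>a. {a, f a}) ` A) \<and> card (\<Union>((\<lambda>a. {a, f a}) ` A)) = 2 * card A"
proof
  have disj: "A \<inter> f ` A = {}" using AB f(2) by blast
  show "is_matching K ((\<lambda>a. {a, f a}) ` A)"
    unfolding is_matching_def
  proof (intro conjI ballI impI)
    show "(\<lambda>a. {a, f a}) ` A \<subseteq> K" using f(2) by auto
    fix e e' assume "e \<in> (\<lambda>a. {a, f a}) ` A" "e' \<in> (\<lambda>a. {a, f a}) ` A" "e \<noteq> e'"
    then obtain a a' where aa: "a \<in> A" "a' \<in> A" "a \<noteq> a'" "e = {a, f a}" "e' = {a', f a'}"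
      by auto
    have "f a \<noteq> f a'" using f(1) aa(1-3) by (auto simp: inj_on_def)
    then show "e \<inter> e' = {}" using aa disj by auto
  qed
  have "\<Union>((\<lambda>a. {a, f a}) ` A) = A \<union> f ` A" by auto
  then show "card (\<Union>((\<lambda>a. {a, f a}) ` A)) = 2 * card A"
    using fA f(1) disj by (simp add: card_Un_disjoint card_image)
qed

lemma matching_unless_hall_violator:
  assumes K: "\<forall>e\<in>K. card e = 2" and fA: "finite A" and fB: "finite B" and AB: "A \<inter> B = {}"
    and no_violator: "\<forall>X\<subseteq>A. \<forall>Y\<subseteq>B. card Y + k < card X \<longrightarrow> edges_between K X (B - Y) \<noteq> {}"
  shows "\<exists>M. is_matching K M \<and> 2 * card A \<le> card (\<Union>M) + 2 * k"
proof -
  define N where "N a = {b\<in>B. {a, b} \<in> K}" for a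
  have "card X \<le> card (\<Union>(N ` X)) + k" if X: "X \<subseteq> A" for X
  proof (rule ccontr)
    assume "\<not> ?thesis"
    have "\<Union>(N ` X) \<subseteq> B" by (auto simp: N_def)
    moreover from \<open>\<not> ?thesis\<close> have "card (\<Union>(N ` X)) + k < card X" by simp
    ultimately have "edges_between K X (B - \<Union>(N ` X)) \<noteq> {}"
      by (rule no_violator[rule_format, OF X])
    then obtain e x b where e: "e \<in> K" "x \<in> e" "x \<in> X" "b \<in> e" "b \<in> B" "b \<notin> \<Union>(N ` X)"
      by (auto simp: edges_between_def)
    have "x \<noteq> b" using X AB e(3,5) by blast
    moreover obtain u w where "e = {u, w}" "u \<noteq> w" using K e(1) by (meson card_2_iff)
    ultimately have "e = {x, b}" using e(2,4) by auto
    then show False using e by (auto simp: N_def)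
  qed
  then have deficiency: "\<forall>X\<subseteq>A. card X \<le> card (\<Union>(N ` X)) + k" by blast
  have "\<forall>a\<in>A. finite (N a)" using fB by (simp add: N_def)
  from hall_marriage_deficiency[OF fA this deficiency] obtain A' f
    where f: "A' \<subseteq> A" "card A \<le> card A' + k" "inj_on f A'" "\<forall>a\<in>A'. f a \<in> N a"
    by blast
  have f_edges: "\<forall>a\<in>A'. f a \<in> B \<and> {a, f a} \<in> K" using f(4) by (simp add: N_def)
  have "A' \<inter> B = {}" using f(1) AB by blast
  moreover have "finite A'" using f(1) fA by (rule finite_subset)
  ultimately have "is_matching K ((\<lambda>a. {a, f a}) ` A') \<and> card (\<Union>((\<lambda>a. {a, f a}) ` A')) = 2 * card A'"
    using f(3) f_edges by (rule matching_of_inj_on)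
  then show ?thesis using f(2) by (intro exI[of _ "(\<lambda>a. {a, f a}) ` A'"]) auto
qed

definition cut_sign :: "'a set \<Rightarrow> 'a set \<Rightarrow> int" where
  "cut_sign T e = (if e \<subseteq> T \<or> e \<inter> T = {} then 1 else -1)"

definition cut_imbalance :: "'a set set \<Rightarrow> 'a set \<Rightarrow> 'a \<Rightarrow> int" where
  "cut_imbalance E T v = (\<Sum>e\<in>{e\<in>E. v \<in> e}. cut_sign T e)"

definition toggle :: "'a \<Rightarrow> 'a set \<Rightarrow> 'a set" where
  "toggle u T = (if u \<in> T then T - {u} else insert u T)"

lemma bij_betw_toggle_Pow:
  assumes "u \<in> V"
  shows "bij_betw (toggle u) (Pow V) (Pow V)"
  by (rule bij_betw_byWitness[where f' = "toggle u"])
    (use assms in \<open>auto simp: toggle_def insert_absorb\<close>)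

lemma sum_Pow_eq_0_if_toggle_negates:
  fixes h :: "'a set \<Rightarrow> int"
  assumes "u \<in> V" "\<And>T. T \<subseteq> V \<Longrightarrow> h (toggle u T) = - h T"
  shows "(\<Sum>T\<in>Pow V. h T) = 0"
proof -
  have "(\<Sum>T\<in>Pow V. h T) = (\<Sum>T\<in>Pow V. h (toggle u T))"
    using sum.reindex_bij_betw[OF bij_betw_toggle_Pow[OF assms(1)], of h] by simp
  also have "\<dots> = - (\<Sum>T\<in>Pow V. h T)"
    using assms(2) by (simp add: sum_negf)
  finally show ?thesis by simp
qed

lemma cut_sign_doubleton: "cut_sign T {a, b} = (if (a \<in> T) = (b \<in> T) then 1 else -1)"
  by (auto simp: cut_sign_def)

lemma mem_toggle_iff: "x \<in> toggle u T \<longleftrightarrow> (if x = u then u \<notin> T else x \<in> T)"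
  by (auto simp: toggle_def)

lemma cut_sign_toggle:
  assumes "card e = 2"
  shows "cut_sign (toggle u T) e = (if u \<in> e then - cut_sign T e else cut_sign T e)"
proof -
  obtain a b where "e = {a, b}" "a \<noteq> b" using assms by (meson card_2_iff)
  then show ?thesis by (simp add: cut_sign_doubleton mem_toggle_iff)
qed

lemma sum_Pow_cut_sign_mult:
  assumes fV: "finite V" and e: "e \<subseteq> V" "card e = 2" and e': "e' \<subseteq> V" "card e' = 2"
  shows "(\<Sum>T\<in>Pow V. cut_sign T e * cut_sign T e') = (if e = e' then 2 ^ card V else 0)"
proof (cases "e = e'")
  case True
  have "cut_sign T e * cut_sign T e' = 1" for T using True by (simp add: cut_sign_def)
  then have "(\<Sum>T\<in>Pow V. cut_sign T e * cut_sign T e') = 2 ^ card V" using fV by (simp add: card_Pow)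
  then show ?thesis using True by simp
next
  case False
  have "finite e'" using e'(2) by (simp add: card_ge_0_finite)
  then have "\<not> e \<subseteq> e'" using card_subset_eq[of e' e] False e(2) e'(2) by auto
  then obtain u where "u \<in> e" "u \<notin> e'" by blast
  then have "(\<Sum>T\<in>Pow V. cut_sign T e * cut_sign T e') = 0"
    using e e'(2) by (intro sum_Pow_eq_0_if_toggle_negates[of u]) (auto simp: cut_sign_toggle)
  then show ?thesis using False by simp
qed

lemma sum_Pow_square_sum_cut_sign:
  assumes fV: "finite V" and fF: "finite F" and F: "\<forall>e\<in>F. e \<subseteq> V \<and> card e = 2"
  shows "(\<Sum>T\<in>Pow V. (\<Sum>e\<in>F. cut_sign T e)\<^sup>2) = int (card F) * 2 ^ card V"
proof -
  have "(\<Sum>T\<in>Pow V. (\<Sum>e\<in>F. cut_sign T e)\<^sup>2)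
      = (\<Sum>e\<in>F. \<Sum>e'\<in>F. \<Sum>T\<in>Pow V. cut_sign T e * cut_sign T e')"
    by (simp add: power2_eq_square sum_product sum.swap[of _ "Pow V"] sum.swap[of _ "Pow V" F])
  also have "\<dots> = (\<Sum>e\<in>F. \<Sum>e'\<in>F. if e = e' then 2 ^ card V else 0)"
    using F by (intro sum.cong refl sum_Pow_cut_sign_mult[OF fV]) auto
  also have "\<dots> = int (card F) * 2 ^ card V" using fF by simp
  finally show ?thesis .
qed

lemma cut_sign_Diff:
  assumes "e \<subseteq> V"
  shows "cut_sign (V - T) e = cut_sign T e"
  using assms by (auto simp: cut_sign_def)

lemma exists_balanced_cut:
  assumes fV: "finite V" and fE: "finite E" and E: "\<forall>e\<in>E. e \<subseteq> V \<and> card e = 2"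
    and reg: "\<forall>v\<in>V. card {e\<in>E. v \<in> e} = d"
  shows "\<exists>T\<subseteq>V. card V \<le> 2 * card T \<and> (\<Sum>v\<in>V. (cut_imbalance E T v)\<^sup>2) \<le> int (card V) * int d"
proof -
  let ?imb = "\<lambda>T. \<Sum>v\<in>V. (cut_imbalance E T v)\<^sup>2"
  \<comment> \<open>The mean of \<open>?imb\<close> over all cuts is \<open>card V * d\<close>, so some cut is no worse.\<close>
  have "(\<Sum>T\<in>Pow V. ?imb T) = (\<Sum>v\<in>V. \<Sum>T\<in>Pow V. (cut_imbalance E T v)\<^sup>2)"
    by (rule sum.swap)
  also have "\<dots> = of_nat (card (Pow V)) * (int (card V) * int d)"
    using reg fE E fV by (simp add: cut_imbalance_def sum_Pow_square_sum_cut_sign card_Pow)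
  finally have total: "(\<Sum>T\<in>Pow V. ?imb T) = of_nat (card (Pow V)) * (int (card V) * int d)" .
  have "\<exists>T\<in>Pow V. ?imb T \<le> int (card V) * int d"
  proof (rule ccontr)
    assume "\<not> ?thesis"
    then have "(\<Sum>T\<in>Pow V. int (card V) * int d) < (\<Sum>T\<in>Pow V. ?imb T)"
      using fV by (intro sum_strict_mono) (auto simp: not_le)
    then show False using total fV by (simp add: card_Pow)
  qed
  then obtain T where T: "T \<subseteq> V" "?imb T \<le> int (card V) * int d" by blast
  have same: "?imb (V - T) = ?imb T"
    using E unfolding cut_imbalance_def
    by (intro sum.cong refl arg_cong[where f = "\<lambda>x. x\<^sup>2"] sum.cong) (auto simp: cut_sign_Diff)
  have "card V \<le> 2 * card T \<or> card V \<le> 2 * card (V - T)"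
    using T(1) fV by (auto simp: card_Diff_subset finite_subset)
  then show ?thesis
  proof
    assume "card V \<le> 2 * card (V - T)"
    then show ?thesis using T same by (intro exI[of _ "V - T"]) auto
  qed (use T in blast)
qed

definition crossing_degree :: "'a set set \<Rightarrow> 'a set \<Rightarrow> 'a \<Rightarrow> nat" where
  "crossing_degree E T v = card {e\<in>E. v \<in> e \<and> cut_sign T e = -1}"

lemma cut_imbalance_eq:
  assumes "finite E"
  shows "cut_imbalance E T v = int (card {e\<in>E. v \<in> e}) - 2 * int (crossing_degree E T v)"
proof -
  have "cut_imbalance E T v = (\<Sum>e\<in>{e\<in>E. v \<in> e}. 1 - 2 * of_bool (cut_sign T e = -1))"
    unfolding cut_imbalance_def by (intro sum.cong refl) (simp add: cut_sign_def)
  also have "\<dots> = int (card {e\<in>E. v \<in> e}) - 2 * int (card ({e\<in>E. v \<in> e} \<inter> {e. cut_sign T e = -1}))"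
    using assms by (simp add: sum_subtractf sum_distrib_left[symmetric])
  also have "{e\<in>E. v \<in> e} \<inter> {e. cut_sign T e = -1} = {e\<in>E. v \<in> e \<and> cut_sign T e = -1}"
    by auto
  finally show ?thesis by (simp add: crossing_degree_def)
qed

lemma sum_crossing_degree_le:
  assumes E: "\<forall>e\<in>E. e \<subseteq> V \<and> card e = 2" and fE: "finite E" and fV: "finite V"
    and T: "T \<subseteq> V" and X: "X \<subseteq> T" and Y: "Y \<subseteq> V - T"
  shows "(\<Sum>x\<in>X. crossing_degree E T x)
           \<le> card (edges_between E X (V - T - Y)) + (\<Sum>y\<in>Y. crossing_degree E T y)"
proof -
  let ?cr = "\<lambda>v. {e\<in>E. v \<in> e \<and> cut_sign T e = -1}"
  have fX: "finite X" and fY: "finite Y" using T X Y by (auto intro: rev_finite_subset[OF fV])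
  have "\<forall>x\<in>X. \<forall>x'\<in>X. x \<noteq> x' \<longrightarrow> ?cr x \<inter> ?cr x' = {}"
  proof (intro ballI impI)
    fix x x' assume xx: "x \<in> X" "x' \<in> X" "x \<noteq> x'"
    show "?cr x \<inter> ?cr x' = {}"
    proof (rule ccontr)
      assume "?cr x \<inter> ?cr x' \<noteq> {}"
      then obtain e where e: "e \<in> E" "x \<in> e" "x' \<in> e" "cut_sign T e = -1" by auto
      obtain a b where "e = {a, b}" "a \<noteq> b" using E e(1) by (meson card_2_iff)
      then have "e \<subseteq> T" using e(2,3) xx X by auto
      then show False using e(4) by (simp add: cut_sign_def)
    qed
  qed
  then have "(\<Sum>x\<in>X. crossing_degree E T x) = card (\<Union>x\<in>X. ?cr x)"
    using fX fE by (simp add: crossing_degree_def card_UN_disjoint)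
  also have "\<dots> \<le> card (edges_between E X (V - T - Y) \<union> (\<Union>y\<in>Y. ?cr y))"
  proof (rule card_mono)
    show "finite (edges_between E X (V - T - Y) \<union> (\<Union>y\<in>Y. ?cr y))"
      by (rule finite_subset[OF _ fE]) (auto simp: edges_between_def)
    show "(\<Union>x\<in>X. ?cr x) \<subseteq> edges_between E X (V - T - Y) \<union> (\<Union>y\<in>Y. ?cr y)"
    proof
      fix e assume "e \<in> (\<Union>x\<in>X. ?cr x)"
      then obtain x where x: "x \<in> X" "e \<in> E" "x \<in> e" "cut_sign T e = -1" by auto
      then obtain b where "b \<in> e" "b \<notin> T" by (auto simp: cut_sign_def split: if_splits)
      moreover have "b \<in> V" using E x(2) \<open>b \<in> e\<close> by auto
      ultimately show "e \<in> edges_between E X (V - T - Y) \<union> (\<Union>y\<in>Y. ?cr y)"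
        using x by (cases "b \<in> Y") (auto simp: edges_between_def)
    qed
  qed
  also have "\<dots> \<le> card (edges_between E X (V - T - Y)) + card (\<Union>y\<in>Y. ?cr y)"
    by (rule card_Un_le)
  also have "card (\<Union>y\<in>Y. ?cr y) \<le> (\<Sum>y\<in>Y. crossing_degree E T y)"
    unfolding crossing_degree_def by (rule card_UN_le[OF fY])
  finally show ?thesis by simp
qed

lemma abs_le_power2_div_add:
  fixes t a :: real
  assumes "a > 0"
  shows "\<bar>t\<bar> \<le> t\<^sup>2 / (2 * a) + a / 2"
proof -
  have "2 * a * \<bar>t\<bar> \<le> t\<^sup>2 + a\<^sup>2"
    using sum_squares_bound[of "\<bar>t\<bar>" a] by (simp add: power2_eq_square algebra_simps)
  then show ?thesis using assms by (simp add: field_simps power2_eq_square)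
qed

lemma sum_abs_le_of_sum_power2_le:
  fixes f :: "'a \<Rightarrow> real" and d eps :: real
  assumes fV: "finite V" and sq: "(\<Sum>v\<in>V. (f v)\<^sup>2) \<le> card V * d"
    and eps: "eps > 0" and d: "16 \<le> d * eps\<^sup>2"
  shows "(\<Sum>v\<in>V. \<bar>f v\<bar>) \<le> card V * (eps * d / 4)"
proof -
  define a where "a = eps * d / 4"
  have "d > 0" using d eps by (smt (verit) mult_nonpos_nonneg zero_le_power2)
  then have a: "a > 0" using eps by (simp add: a_def)
  have "(\<Sum>v\<in>V. \<bar>f v\<bar>) \<le> (\<Sum>v\<in>V. (f v)\<^sup>2 / (2 * a) + a / 2)"
    using abs_le_power2_div_add[OF a] by (intro sum_mono) auto
  also have "\<dots> = (\<Sum>v\<in>V. (f v)\<^sup>2) / (2 * a) + card V * a / 2"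
    by (simp add: sum.distrib sum_divide_distrib)
  also have "\<dots> \<le> card V * d / (2 * a) + card V * a / 2"
    using sq a by (simp add: divide_right_mono)
  also have "\<dots> = card V * (2 / eps + eps * d / 8)"
    using \<open>d > 0\<close> eps by (simp add: a_def field_simps)
  also have "\<dots> \<le> card V * (eps * d / 4)"
  proof -
    have "2 / eps \<le> eps * d / 8" using d eps by (simp add: field_simps power2_eq_square)
    then have "2 / eps + eps * d / 8 \<le> eps * d / 4" by linarith
    then show ?thesis by (rule mult_left_mono) simp
  qed
  finally show ?thesis .
qed

lemma card_edges_leaving_hall_violator:
  fixes eps :: real
  assumes E: "\<forall>e\<in>E. e \<subseteq> V \<and> card e = 2" and fE: "finite E" and fV: "finite V"
    and reg: "\<forall>v\<in>V. card {e\<in>E. v \<in> e} = d"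
    and T: "T \<subseteq> V" and balanced: "(\<Sum>v\<in>V. (cut_imbalance E T v)\<^sup>2) \<le> int (card V) * int d"
    and X: "X \<subseteq> T" and Y: "Y \<subseteq> V - T" and XY: "card Y + eps * card V / 2 < card X"
    and eps: "eps > 0" and d: "16 \<le> d * eps\<^sup>2"
  shows "eps * d * card V / 8 \<le> card (edges_between E X (V - T - Y))"
proof -
  define imb where "imb v = real_of_int (cut_imbalance E T v)" for v
  have fX: "finite X" and fY: "finite Y" and XY_disj: "X \<inter> Y = {}"
    using T X Y by (auto intro: rev_finite_subset[OF fV])
  have crossing: "2 * real (crossing_degree E T v) = d - imb v" if "v \<in> V" for v
    using cut_imbalance_eq[OF fE] reg that by (simp add: imb_def)
  have "(\<Sum>x\<in>X. 2 * real (crossing_degree E T x))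
        \<le> 2 * real (card (edges_between E X (V - T - Y))) + (\<Sum>y\<in>Y. 2 * real (crossing_degree E T y))"
    using sum_crossing_degree_le[OF E fE fV T X Y]
    by (simp add: sum_distrib_left[symmetric] flip: of_nat_sum)
  moreover have "(\<Sum>x\<in>X. 2 * real (crossing_degree E T x)) = (\<Sum>x\<in>X. d - imb x)"
    using X T crossing by (intro sum.cong) auto
  moreover have "(\<Sum>y\<in>Y. 2 * real (crossing_degree E T y)) = (\<Sum>y\<in>Y. d - imb y)"
    using Y crossing by (intro sum.cong) auto
  moreover have "(\<Sum>x\<in>X. imb x) - (\<Sum>y\<in>Y. imb y) \<le> (\<Sum>v\<in>X \<union> Y. \<bar>imb v\<bar>)"
  proof -
    have "(\<Sum>x\<in>X. imb x) \<le> (\<Sum>x\<in>X. \<bar>imb x\<bar>)" "- (\<Sum>y\<in>Y. imb y) \<le> (\<Sum>y\<in>Y. \<bar>imb y\<bar>)"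
      by (auto simp flip: sum_negf intro: sum_mono)
    then show ?thesis by (simp add: sum.union_disjoint[OF fX fY XY_disj])
  qed
  moreover have "(\<Sum>v\<in>X \<union> Y. \<bar>imb v\<bar>) \<le> (\<Sum>v\<in>V. \<bar>imb v\<bar>)"
    using T X Y fV by (intro sum_mono2) auto
  moreover have "(\<Sum>v\<in>V. \<bar>imb v\<bar>) \<le> card V * (eps * d / 4)"
  proof (rule sum_abs_le_of_sum_power2_le[OF fV _ eps d])
    have "(\<Sum>v\<in>V. (imb v)\<^sup>2) = real_of_int (\<Sum>v\<in>V. (cut_imbalance E T v)\<^sup>2)"
      by (simp add: imb_def)
    also have "\<dots> \<le> real_of_int (int (card V) * int d)" using balanced by (simp only: of_int_le_iff)
    finally show "(\<Sum>v\<in>V. (imb v)\<^sup>2) \<le> real (card V) * real d" by simp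
  qed
  moreover have "real d * (eps * card V / 2) \<le> real d * (real (card X) - real (card Y))"
    using XY by (intro mult_left_mono) auto
  ultimately show ?thesis by (simp add: sum_subtractf algebra_simps)
qed

lemma prob_random_subgraph_avoids:
  assumes fE: "finite E" and F: "F \<subseteq> E" and p: "0 \<le> p" "p \<le> 1"
  shows "measure_pmf.prob (random_subgraph E p) {keep. \<forall>e\<in>F. \<not> keep e} = (1 - p) ^ card F"
proof -
  have "{keep. \<forall>e\<in>F. \<not> keep e} = Pi E (\<lambda>e. if e \<in> F then {False} else UNIV)"
    using F by (auto simp: Pi_def)
  then have "measure_pmf.prob (random_subgraph E p) {keep. \<forall>e\<in>F. \<not> keep e}
      = (\<Prod>e\<in>E. measure_pmf.prob (bernoulli_pmf p) (if e \<in> F then {False} else UNIV))"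
    unfolding random_subgraph_def using fE by (simp add: measure_Pi_pmf_Pi)
  also have "\<dots> = (\<Prod>e\<in>E. if e \<in> F then 1 - p else 1)"
    using p by (intro prod.cong refl) (simp add: measure_pmf_single)
  also have "\<dots> = (1 - p) ^ card F"
    using fE F by (simp add: prod.If_cases Int_absorb1)
  finally show ?thesis .
qed

lemma one_minus_power_le_exp:
  fixes p :: real
  assumes "0 \<le> p" "p \<le> 1"
  shows "(1 - p) ^ m \<le> exp (- p * m)"
proof -
  have "(1 - p) ^ m \<le> exp (- p) ^ m"
    using assms exp_ge_add_one_self[of "- p"] by (intro power_mono) auto
  also have "\<dots> = exp (- p * m)" by (simp flip: exp_of_nat_mult add: mult.commute)
  finally show ?thesis .
qed

lemma prob_random_subgraph_avoids_some:
  fixes p c :: real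
  assumes fE: "finite E" and p: "0 \<le> p" "p \<le> 1" and fI: "finite I"
    and F: "\<forall>i\<in>I. F i \<subseteq> E \<and> c \<le> p * card (F i)"
  shows "measure_pmf.prob (random_subgraph E p) {keep. \<exists>i\<in>I. \<forall>e\<in>F i. \<not> keep e} \<le> card I * exp (- c)"
proof -
  let ?P = "random_subgraph E p"
  have "{keep. \<exists>i\<in>I. \<forall>e\<in>F i. \<not> keep e} = (\<Union>i\<in>I. {keep. \<forall>e\<in>F i. \<not> keep e})"
    by auto
  then have "measure_pmf.prob ?P {keep. \<exists>i\<in>I. \<forall>e\<in>F i. \<not> keep e}
      \<le> (\<Sum>i\<in>I. measure_pmf.prob ?P {keep. \<forall>e\<in>F i. \<not> keep e})"
    using fI by (simp add: measure_pmf.finite_measure_subadditive_finite)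
  also have "\<dots> \<le> (\<Sum>i\<in>I. exp (- c))"
  proof (rule sum_mono)
    fix i assume i: "i \<in> I"
    have "measure_pmf.prob ?P {keep. \<forall>e\<in>F i. \<not> keep e} = (1 - p) ^ card (F i)"
      using F i by (intro prob_random_subgraph_avoids[OF fE _ p]) auto
    also have "\<dots> \<le> exp (- p * card (F i))" by (rule one_minus_power_le_exp[OF p])
    also have "\<dots> \<le> exp (- c)" using F i by simp
    finally show "measure_pmf.prob ?P {keep. \<forall>e\<in>F i. \<not> keep e} \<le> exp (- c)" .
  qed
  finally show ?thesis by simp
qed

lemma two_power_le_exp: "(2::real) ^ n \<le> exp n"
proof -
  have "(2::real) ^ n \<le> exp 1 ^ n"
    using exp_ge_add_one_self[of 1] by (intro power_mono) auto
  then show ?thesis by (simp flip: exp_of_nat_mult)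
qed

lemma prob_hall_violator_le:
  fixes eps p :: real
  assumes E: "\<forall>e\<in>E. e \<subseteq> V \<and> card e = 2" and fE: "finite E" and fV: "finite V"
    and reg: "\<forall>v\<in>V. card {e\<in>E. v \<in> e} = d"
    and A: "A \<subseteq> V" and balanced: "(\<Sum>v\<in>V. (cut_imbalance E A v)\<^sup>2) \<le> int (card V) * int d"
    and k: "eps * card V / 2 < k + 1" and eps: "eps > 0" and p: "0 \<le> p" "p \<le> 1"
    and d: "16 \<le> d * eps\<^sup>2" and pd: "24 \<le> p * d * eps"
  shows "measure_pmf.prob (random_subgraph E p)
           {keep. \<exists>X\<subseteq>A. \<exists>Y\<subseteq>V - A. card Y + k < card X \<and> (\<forall>e\<in>edges_between E X (V - A - Y). \<not> keep e)}
         \<le> exp (- real (card V))"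
proof -
  define I where "I = {(X, Y). X \<subseteq> A \<and> Y \<subseteq> V - A \<and> card Y + k < card X}"
  define F where "F XY = edges_between E (fst XY) (V - A - snd XY)" for XY
  have fA: "finite A" using A fV by (rule finite_subset)
  have "I \<subseteq> Pow A \<times> Pow (V - A)" by (auto simp: I_def)
  moreover have "finite (Pow A \<times> Pow (V - A))" using fA fV by simp
  ultimately have fI: "finite I" and "card I \<le> card (Pow A \<times> Pow (V - A))"
    by (auto intro: finite_subset card_mono)
  note \<open>card I \<le> card (Pow A \<times> Pow (V - A))\<close>
  also have "\<dots> = 2 ^ card V"
    using A fV fA card_mono[OF fV A]
    by (simp add: card_cartesian_product card_Pow card_Diff_subset flip: power_add)
  finally have card_I: "real (card I) \<le> 2 ^ card V" by (simp flip: of_nat_le_iff)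
  have "F XY \<subseteq> E \<and> 3 * real (card V) \<le> p * card (F XY)" if "XY \<in> I" for XY
  proof -
    obtain X Y where XY: "XY = (X, Y)" by fastforce
    with that have X: "X \<subseteq> A" and Y: "Y \<subseteq> V - A" and "card Y + k < card X"
      by (auto simp: I_def)
    then have "card Y + eps * card V / 2 < card X" using k by linarith
    then have "eps * d * card V / 8 \<le> card (F XY)"
      using card_edges_leaving_hall_violator[OF E fE fV reg A balanced X Y _ eps d] by (simp add: F_def XY)
    then have "p * (eps * d * card V / 8) \<le> p * card (F XY)" using p by (intro mult_left_mono)
    moreover have "24 * real (card V) \<le> (p * d * eps) * card V" using pd by (intro mult_right_mono) auto
    ultimately show ?thesis by (auto simp: F_def edges_between_def field_simps)
  qed
  then have "measure_pmf.prob (random_subgraph E p) {keep. \<exists>XY\<in>I. \<forall>e\<in>F XY. \<not> keep e}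
      \<le> card I * exp (- (3 * real (card V)))"
    using fE p fI by (intro prob_random_subgraph_avoids_some) auto
  also have "\<dots> \<le> exp (card V) * exp (- (3 * real (card V)))"
    using order_trans[OF card_I two_power_le_exp] by (intro mult_right_mono) auto
  also have "\<dots> \<le> exp (- real (card V))" by (simp flip: exp_add)
  also have "{keep. \<exists>XY\<in>I. \<forall>e\<in>F XY. \<not> keep e}
      = {keep. \<exists>X\<subseteq>A. \<exists>Y\<subseteq>V - A. card Y + k < card X \<and> (\<forall>e\<in>edges_between E X (V - A - Y). \<not> keep e)}"
    by (auto simp: I_def F_def)
  finally show ?thesis .
qed

lemma prob_large_matching_ge:
  fixes eps p :: real
  assumes eps: "eps > 0" and reg: "regular_graph n d E" and p: "0 \<le> p" "p \<le> 1"
    and d: "16 \<le> d * eps\<^sup>2" and pd: "24 \<le> p * d * eps"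
  shows "prob_large_matching n E p eps \<ge> 1 - exp (- real n)"
proof -
  define V where "V = {..<n}"
  have E: "\<forall>e\<in>E. e \<subseteq> V \<and> card e = 2" and degs: "\<forall>v\<in>V. card {e\<in>E. v \<in> e} = d"
    using reg by (auto simp: regular_graph_def simple_graph_def V_def)
  have fV: "finite V" and cardV: "card V = n" by (simp_all add: V_def)
  have "E \<subseteq> Pow V" using E by auto
  then have fE: "finite E" using fV by (simp add: finite_subset)
  obtain A where A: "A \<subseteq> V" "n \<le> 2 * card A"
    and balanced: "(\<Sum>v\<in>V. (cut_imbalance E A v)\<^sup>2) \<le> int (card V) * int d"
    using exists_balanced_cut[OF fV fE E degs] cardV by blast
  define k where "k = nat \<lfloor>eps * n / 2\<rfloor>"
  have "real k = of_int \<lfloor>eps * n / 2\<rfloor>" using eps by (simp add: k_def)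
  then have k: "2 * real k \<le> eps * n" "eps * n / 2 < real k + 1"
    using of_int_floor_le[of "eps * n / 2"] real_of_int_floor_add_one_gt[of "eps * n / 2"] by linarith+
  define Bad where "Bad = {keep. \<exists>X\<subseteq>A. \<exists>Y\<subseteq>V - A. card Y + k < card X
                                  \<and> (\<forall>e\<in>edges_between E X (V - A - Y). \<not> keep e)}"
  define Good where "Good = {keep. \<exists>M. is_matching {e\<in>E. keep e} M \<and> (1 - eps) * n \<le> card (\<Union>M)}"
  let ?P = "random_subgraph E p"
  have "- Bad \<subseteq> Good"
  proof
    fix keep assume "keep \<in> - Bad"
    have "edges_between {e\<in>E. keep e} X (V - A - Y) \<noteq> {}"
      if "X \<subseteq> A" "Y \<subseteq> V - A" "card Y + k < card X" for X Y
    proof -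
      from \<open>keep \<in> - Bad\<close> that obtain e where "e \<in> edges_between E X (V - A - Y)" "keep e"
        unfolding Bad_def by blast
      then show ?thesis by (auto simp: edges_between_def)
    qed
    then have "\<forall>X\<subseteq>A. \<forall>Y\<subseteq>V - A. card Y + k < card X \<longrightarrow> edges_between {e\<in>E. keep e} X (V - A - Y) \<noteq> {}"
      by blast
    moreover have "\<forall>e\<in>{e\<in>E. keep e}. card e = 2" "finite A" "finite (V - A)"
      using E A(1) fV by (auto intro: finite_subset)
    ultimately obtain M where "is_matching {e\<in>E. keep e} M" "2 * card A \<le> card (\<Union>M) + 2 * k"
      using matching_unless_hall_violator[of "{e\<in>E. keep e}" A "V - A" k] by blast
    then show "keep \<in> Good" using A(2) k(1) by (auto simp: Good_def algebra_simps)
  qed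
  then have "measure_pmf.prob ?P (- Bad) \<le> measure_pmf.prob ?P Good"
    by (intro measure_pmf.finite_measure_mono) auto
  moreover have "measure_pmf.prob ?P (- Bad) = 1 - measure_pmf.prob ?P Bad"
    using measure_pmf.prob_compl[of Bad ?P] by (simp add: Compl_eq_Diff_UNIV)
  moreover have "measure_pmf.prob ?P Bad \<le> exp (- real n)"
    using prob_hall_violator_le[OF E fE fV degs A(1) balanced _ eps p d pd] k(2)
    unfolding Bad_def cardV by blast
  ultimately show ?thesis by (simp add: prob_large_matching_def Good_def)
qed

theorem theorem1p1:
  fixes eps :: real
  assumes "eps > 0"
  shows "\<exists>C>0. \<forall>\<delta>>0. \<exists>N. \<forall>n\<ge>N. \<forall>(d::nat) (E::nat set set) (p::real).
           real d \<ge> C \<and> regular_graph n d E \<and> 0 \<le> p \<and> p \<le> 1 \<and> p \<ge> C / real d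
           \<longrightarrow> prob_large_matching n E p eps \<ge> 1 - \<delta>"
proof -
  define C where "C = 16 / eps\<^sup>2 + 24 / eps"
  have "16 / eps\<^sup>2 > 0" "24 / eps > 0" using assms by simp_all
  then have C: "16 / eps\<^sup>2 \<le> C" "24 / eps \<le> C" "C > 0" unfolding C_def by linarith+
  have "prob_large_matching n E p eps \<ge> 1 - \<delta>"
    if "\<delta> > 0" "nat \<lceil>- ln \<delta>\<rceil> \<le> n" "C \<le> real d" "regular_graph n d E" "0 \<le> p" "p \<le> 1" "C / real d \<le> p"
    for \<delta> n d E p
  proof -
    have "real d > 0" using that(3) C(3) by linarith
    then have "C \<le> p * d" using that(7) by (simp add: field_simps)
    moreover have "16 \<le> C * eps\<^sup>2" "24 \<le> C * eps"
      using C(1,2) assms by (simp_all add: field_simps)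
    moreover have "C * eps\<^sup>2 \<le> d * eps\<^sup>2" using that(3) by (rule mult_right_mono) simp
    moreover have "C * eps \<le> p * d * eps"
      using \<open>C \<le> p * d\<close> assms by (simp add: mult_right_mono)
    ultimately have "16 \<le> d * eps\<^sup>2" "24 \<le> p * d * eps" by linarith+
    then have "1 - exp (- real n) \<le> prob_large_matching n E p eps"
      using prob_large_matching_ge[OF assms that(4-6)] by blast
    moreover have "- ln \<delta> \<le> real n"
      using real_nat_ceiling_ge[of "- ln \<delta>"] that(2) by (meson of_nat_le_iff order_trans)
    then have "exp (- real n) \<le> \<delta>" using that(1) by (metis exp_le_cancel_iff exp_ln minus_le_iff)
    ultimately show ?thesis by linarith
  qed
  then show ?thesis using C(3) by blast
qed

end
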